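(* Let $R$ be an integral domain and $f\in R[[X]]$. (1) If $f$ is irreducible in $R[[X]]$, then $(f_0)\neq R$, and for any $a,b\in R$ with $f_0=ab$ and $(a,b)=R$ one has $(a)=R$ or $(b)=R$. Conversely, if $(f_1)=R$, $(f_0)\ne R$, and for all $a,b\in R$ with $f_0=ab$ and $(a,b)=R$ one has $(a)=R$ or $(b)=R$, then $f$ is irreducible in $R[[X]]$. (2) If $R$ is a PID and $f$ is irreducible in $R[[X]]$, then either $(f)=(X)$ or $f_0$ is associate to a power of a prime element of $R$. (3) If $R$ is a UFD but not a PID, then there exist irreducible elements of $R[[X]]$ whose constant term is neither zero nor associate to a power of a prime; in fact, if $\pi,\sigma\in R$ are nonassociate primes with $(\pi,\sigma)\neq R$, then $\pi\sigma+XU$ is irreducible in $R[[X]]$ for every unit $U\in R[[X]]$.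
   Context: $f_i$ denotes the coefficient of $X^i$ in $f$. A nonzero element $a$ is prime if $(a)$ is a prime ideal. *)

theory Defs
  imports "HOL-Computational_Algebra.Computational_Algebra"
begin

definition ring_ideal :: "'a::comm_ring_1 set \<Rightarrow> bool" where
  "ring_ideal I \<longleftrightarrow> 0 \<in> I \<and> (\<forall>x\<in>I. \<forall>y\<in>I. x + y \<in> I) \<and> (\<forall>r. \<forall>x\<in>I. r * x \<in> I)"

definition is_PID :: "'a::idom itself \<Rightarrow> bool" where
  "is_PID _ \<longleftrightarrow> (\<forall>I::'a set. ring_ideal I \<longrightarrow> (\<exists>a. I = {a * r | r. True}))"

definition comaximal :: "'a::comm_ring_1 \<Rightarrow> 'a \<Rightarrow> bool" where
  "comaximal a b \<longleftrightarrow> (\<exists>x y. a * x + b * y = 1)"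

definition associated :: "'a::comm_ring_1 \<Rightarrow> 'a \<Rightarrow> bool" where
  "associated a b \<longleftrightarrow> a dvd b \<and> b dvd a"

end

(*
  A factorization f = g h in R[[X]] is trivial exactly when g_0 or h_0 is a unit. Conversely,
  every splitting f_0 = a b into comaximal factors lifts: if a x + b y = 1, then
  g = a + X y q and h = b + X x q multiply to f as soon as q + X x y q^2 = (f - f_0)/X,
  an equation that is solved coefficient by coefficient. If f_1 is a unit, the coefficient
  of X in f = g h is g_0 h_1 + g_1 h_0, so g_0 and h_0 are comaximal.

  In a PID, principal ideals satisfy ACC and any two elements have a Bezout gcd. Writing
  f_0 = q^k c with q prime and q not dividing c, the factors q^k and c are comaximal,
  so c must be a unit. In a UFD in which nonassociate primes are always comaximal, the
  same Bezout property holds and a nonzero element of an ideal with the fewest prime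
  factors generates it; so a UFD that is not a PID has nonassociate primes \<pi>, \<sigma> with
  (\<pi>, \<sigma>) \<noteq> R, and \<pi> \<sigma> has no nontrivial comaximal splitting.
*)

theory Submission
  imports Defs
begin

lemma fps_dvd_one_iff: "(f :: 'a::comm_ring_1 fps) dvd 1 \<longleftrightarrow> f $ 0 dvd 1"
proof
  assume "f dvd 1"
  then obtain g where "1 = f * g" by (elim dvdE)
  then have "1 = f $ 0 * g $ 0" by (metis fps_mult_nth_0 fps_one_nth)
  then show "f $ 0 dvd 1" by (rule dvdI)
next
  assume "f $ 0 dvd 1"
  then obtain y where "f $ 0 * y = 1" by (metis dvdE)
  then have "f * fps_right_inverse f y = 1" by (rule fps_right_inverse)
  then show "f dvd 1" by (metis dvdI)
qed

lemma fps_const_plus_fps_X_shift: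
  "fps_const (f $ 0) + fps_X * fps_shift 1 f = (f :: 'a::comm_ring_1 fps)"
  by (rule fps_ext) simp

fun fps_X_quadratic_root_nth :: "'a::comm_ring_1 \<Rightarrow> 'a fps \<Rightarrow> nat \<Rightarrow> 'a" where
  "fps_X_quadratic_root_nth c f 0 = f $ 0"
| "fps_X_quadratic_root_nth c f (Suc n) = f $ Suc n -
     c * (\<Sum>i=0..n. fps_X_quadratic_root_nth c f i * fps_X_quadratic_root_nth c f (n - i))"

lemma fps_X_quadratic_solvable:
  fixes c :: "'a::comm_ring_1"
  shows "\<exists>q. q + fps_X * (fps_const c * q\<^sup>2) = f"
proof
  let ?q = "Abs_fps (fps_X_quadratic_root_nth c f)"
  show "?q + fps_X * (fps_const c * ?q\<^sup>2) = f"
  proof (rule fps_ext)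
    fix n show "(?q + fps_X * (fps_const c * ?q\<^sup>2)) $ n = f $ n"
      by (cases n) (simp_all add: power2_eq_square fps_mult_nth[of ?q ?q])
  qed
qed

lemma comaximal_commute: "comaximal a b \<longleftrightarrow> comaximal b a"
  unfolding comaximal_def by (metis add.commute)

lemma comaximalI_unit: "(a * x + b * y) dvd 1 \<Longrightarrow> comaximal a b"
proof -
  assume "(a * x + b * y) dvd 1"
  then obtain w where "(a * x + b * y) * w = 1" by (metis dvdE mult.commute)
  then have "a * (x * w) + b * (y * w) = 1" by (simp add: algebra_simps)
  then show "comaximal a b" unfolding comaximal_def by blast
qed

lemma comaximal_unit_right: "b dvd 1 \<Longrightarrow> comaximal a b"
  using comaximalI_unit[of a 0 b 1] by simp

lemma comaximal_dvd:
  assumes "comaximal a b" and "a' dvd a" and "b' dvd b"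
  shows "comaximal a' b'"
proof -
  obtain x y where "a * x + b * y = 1" using assms(1) by (auto simp: comaximal_def)
  moreover obtain s t where "a = a' * s" "b = b' * t" using assms(2,3) by (auto elim!: dvdE)
  ultimately have "a' * (s * x) + b' * (t * y) = 1" by (simp add: algebra_simps)
  then show ?thesis unfolding comaximal_def by blast
qed

lemma comaximal_mult_left:
  assumes "comaximal a c" and "comaximal b c"
  shows "comaximal (a * b) c"
proof -
  obtain x y x' y' where "a * x + c * y = 1" "b * x' + c * y' = 1"
    using assms by (auto simp: comaximal_def)
  then have "(a * x + c * y) * (b * x' + c * y') = 1" by simp
  then have "(a * b) * (x * x') + c * (y * b * x' + a * x * y' + c * y * y') = 1"
    by (simp add: algebra_simps)
  then show ?thesis unfolding comaximal_def by blast
qed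

lemma comaximal_power_left: "comaximal a c \<Longrightarrow> comaximal (a ^ n) c"
  by (induction n) (simp_all add: comaximal_commute[of 1] comaximal_unit_right comaximal_mult_left)

lemma fps_lift_comaximal_factorization:
  fixes f :: "'a::comm_ring_1 fps"
  assumes "f $ 0 = a * b" and "comaximal a b"
  obtains g h where "f = g * h" and "g $ 0 = a" and "h $ 0 = b"
proof -
  obtain x y where xy: "a * x + b * y = 1"
    using \<open>comaximal a b\<close> by (auto simp: comaximal_def)
  obtain q where q: "q + fps_X * (fps_const (x * y) * q\<^sup>2) = fps_shift 1 f"
    using fps_X_quadratic_solvable by blast
  define g where "g = fps_const a + fps_const y * fps_X * q"
  define h where "h = fps_const b + fps_const x * fps_X * q"
  have "g * h = fps_const (a * b) +
      fps_X * (fps_const (a * x + b * y) * q + fps_X * (fps_const (x * y) * q\<^sup>2))"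
    unfolding g_def h_def
    by (simp add: algebra_simps power2_eq_square flip: fps_const_mult fps_const_add)
  also have "\<dots> = f"
    using xy q assms(1) fps_const_plus_fps_X_shift[of f] by simp
  finally have "f = g * h" ..
  moreover have "g $ 0 = a" "h $ 0 = b" by (simp_all add: g_def h_def)
  ultimately show thesis by (rule that)
qed

lemma irreducible_fps_nth_0:
  fixes f :: "'a::comm_ring_1 fps"
  assumes "irreducible f"
  shows "\<not> f $ 0 dvd 1"
    and "f $ 0 = a * b \<Longrightarrow> comaximal a b \<Longrightarrow> a dvd 1 \<or> b dvd 1"
proof -
  show "\<not> f $ 0 dvd 1" using assms irreducible_not_unit fps_dvd_one_iff by blast
next
  assume "f $ 0 = a * b" "comaximal a b"
  then obtain g h where "f = g * h" "g $ 0 = a" "h $ 0 = b"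
    by (rule fps_lift_comaximal_factorization)
  then show "a dvd 1 \<or> b dvd 1" using irreducibleD[OF assms] fps_dvd_one_iff by metis
qed

lemma irreducible_fpsI:
  fixes f :: "'a::comm_ring_1 fps"
  assumes "f $ 1 dvd 1" and "\<not> f $ 0 dvd 1"
    and "\<And>a b. f $ 0 = a * b \<Longrightarrow> comaximal a b \<Longrightarrow> a dvd 1 \<or> b dvd 1"
  shows "irreducible f"
proof (rule irreducibleI)
  show "f \<noteq> 0" using assms(1) by auto
  show "\<not> f dvd 1" using assms(2) fps_dvd_one_iff by blast
  fix g h assume f: "f = g * h"
  have "f $ 1 = g $ 0 * h $ 1 + h $ 0 * g $ 1" using f by (simp add: fps_mult_nth_1 mult.commute)
  with assms(1) have "comaximal (g $ 0) (h $ 0)" by (metis comaximalI_unit)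
  moreover have "f $ 0 = g $ 0 * h $ 0" using f by simp
  ultimately have "g $ 0 dvd 1 \<or> h $ 0 dvd 1" using assms(3) by blast
  then show "g dvd 1 \<or> h dvd 1" using fps_dvd_one_iff by blast
qed

lemma associated_mult_unit_left:
  assumes "u dvd 1"
  shows "associated (a * u) a"
proof -
  obtain w where "1 = u * w" using assms by (elim dvdE)
  then have "a = (a * u) * w" by (simp add: mult.assoc)
  then show ?thesis unfolding associated_def by (metis dvdI dvd_triv_left)
qed

lemma associated_if_dvd_prime_elem:
  fixes p q :: "'a::idom"
  assumes "prime_elem p" and "q dvd p" and "\<not> q dvd 1"
  shows "associated p q"
proof -
  obtain t where t: "p = q * t" using assms(2) by (elim dvdE)
  have "\<not> p dvd t"
  proof
    assume "p dvd t"
    then obtain s where "t = p * s" by (elim dvdE)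
    then have "p * (q * s) = p * 1" using t by (simp add: algebra_simps)
    then have "q * s = 1" using assms(1) by (simp add: prime_elem_not_zeroI)
    with assms(3) show False by (metis dvd_triv_left)
  qed
  moreover have "p dvd q * t" using t by simp
  ultimately have "p dvd q" using assms(1) by (simp add: prime_elem_dvd_mult_iff)
  with assms(2) show ?thesis by (simp add: associated_def)
qed

lemma prime_elem_mult_dvd:
  fixes \<pi> \<sigma> :: "'a::idom"
  assumes "prime_elem \<pi>" "prime_elem \<sigma>" "\<not> associated \<pi> \<sigma>"
    and "\<pi> dvd a" "\<sigma> dvd a"
  shows "\<pi> * \<sigma> dvd a"
proof -
  obtain a' where a: "a = \<pi> * a'" using assms(4) by (elim dvdE)
  have "\<not> \<sigma> dvd \<pi>"
  proof
    assume "\<sigma> dvd \<pi>"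
    with assms(1,2) have "associated \<pi> \<sigma>"
      by (simp add: associated_if_dvd_prime_elem prime_elem_not_unit)
    with assms(3) show False ..
  qed
  then have "\<sigma> dvd a'" using assms(2,5) a by (simp add: prime_elem_dvd_mult_iff)
  then show ?thesis using a by simp
qed

lemma comaximal_factorization_of_prime_product:
  fixes \<pi> \<sigma> :: "'a::idom"
  assumes "prime_elem \<pi>" "prime_elem \<sigma>" "\<not> associated \<pi> \<sigma>" "\<not> comaximal \<pi> \<sigma>"
    and "\<pi> * \<sigma> = a * b" "comaximal a b"
  shows "a dvd 1 \<or> b dvd 1"
proof -
  have cofactor_unit: "b dvd 1" if ab: "\<pi> * \<sigma> = a * b" "comaximal a b" and "\<pi> dvd a" for a b
  proof -
    have "\<not> \<sigma> dvd b" using ab(2) \<open>\<pi> dvd a\<close> assms(4) comaximal_dvd by blast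
    moreover have "\<sigma> dvd a * b" unfolding ab(1)[symmetric] by simp
    ultimately have "\<sigma> dvd a" using assms(2) by (simp add: prime_elem_dvd_mult_iff)
    then have "\<pi> * \<sigma> dvd a" using prime_elem_mult_dvd[OF assms(1-3) \<open>\<pi> dvd a\<close>] by blast
    then obtain t where "a = \<pi> * \<sigma> * t" by (elim dvdE)
    then have "(\<pi> * \<sigma>) * (t * b) = (\<pi> * \<sigma>) * 1"
      using ab(1) by (metis mult.assoc mult_1_right)
    moreover have "\<pi> * \<sigma> \<noteq> 0" using assms(1,2) by (simp add: prime_elem_not_zeroI)
    ultimately have "t * b = 1" using mult_left_cancel by blast
    then show ?thesis by (metis dvd_triv_right)
  qed
  have "\<pi> dvd a * b" unfolding assms(5)[symmetric] by simp
  then consider "\<pi> dvd a" | "\<pi> dvd b" using assms(1) by (auto simp: prime_elem_dvd_mult_iff)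
  then show ?thesis
  proof cases
    case 1 then show ?thesis using cofactor_unit assms(5,6) by blast
  next
    case 2 then show ?thesis
      using cofactor_unit[of b a] assms(5,6) by (simp add: comaximal_commute mult.commute)
  qed
qed

lemma irreducible_fps_prime_product_plus_X:
  fixes \<pi> \<sigma> :: "'a::idom" and U :: "'a fps"
  assumes "prime_elem \<pi>" "prime_elem \<sigma>" "\<not> associated \<pi> \<sigma>" "\<not> comaximal \<pi> \<sigma>"
    and "U dvd 1"
  shows "irreducible (fps_const (\<pi> * \<sigma>) + fps_X * U)"
proof (rule irreducible_fpsI)
  show "(fps_const (\<pi> * \<sigma>) + fps_X * U) $ 1 dvd 1" using assms(5) by (simp add: fps_dvd_one_iff)
  show "\<not> (fps_const (\<pi> * \<sigma>) + fps_X * U) $ 0 dvd 1"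
    using assms(1) by (auto simp: prime_elem_not_unit dest: dvd_mult_left)
qed (simp add: comaximal_factorization_of_prime_product[OF assms(1-4)])

lemma prime_product_not_associated_prime_power:
  fixes \<pi> \<sigma> :: "'a::idom"
  assumes "prime_elem \<pi>" "prime_elem \<sigma>" "\<not> associated \<pi> \<sigma>" and "prime_elem p"
  shows "\<not> associated (\<pi> * \<sigma>) (p ^ n)"
proof
  assume "associated (\<pi> * \<sigma>) (p ^ n)"
  then have "\<pi> dvd p ^ n" "\<sigma> dvd p ^ n"
    unfolding associated_def by (auto intro: dvd_mult_left dvd_mult_right)
  then have "\<pi> dvd p" "\<sigma> dvd p" using assms(1,2) prime_elem_dvd_power by blast+
  then have "associated p \<pi>" "associated p \<sigma>"
    using assms(1,2,4) by (simp_all add: associated_if_dvd_prime_elem prime_elem_not_unit)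
  then have "associated \<pi> \<sigma>" unfolding associated_def by (blast intro: dvd_trans)
  with assms(3) show False ..
qed

lemma is_PID_principal:
  fixes I :: "'a::idom set"
  assumes "is_PID TYPE('a)" and "ring_ideal I"
  obtains c where "c \<in> I" and "\<And>x. x \<in> I \<Longrightarrow> c dvd x"
proof -
  obtain c where I: "I = {c * r | r. True}" using assms unfolding is_PID_def by blast
  have "c \<in> I" unfolding I by (auto intro!: exI[of _ 1])
  moreover have "c dvd x" if "x \<in> I" for x using that unfolding I by auto
  ultimately show thesis by (rule that)
qed

lemma is_PID_bezout:
  fixes a b :: "'a::idom"
  assumes "is_PID TYPE('a)"
  obtains d u v where "d dvd a" and "d dvd b" and "d = a * u + b * v"
proof -
  let ?I = "{a * u + b * v | u v. True}"
  have "ring_ideal ?I" unfolding ring_ideal_def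
  proof (intro conjI ballI allI)
    show "0 \<in> ?I" by (auto intro!: exI[of _ 0])
  next
    fix x y assume "x \<in> ?I" "y \<in> ?I"
    then obtain u v u' v' where "x = a * u + b * v" "y = a * u' + b * v'" by blast
    then have "x + y = a * (u + u') + b * (v + v')" by (simp add: algebra_simps)
    then show "x + y \<in> ?I" by blast
  next
    fix r x assume "x \<in> ?I"
    then obtain u v where "x = a * u + b * v" by blast
    then have "r * x = a * (r * u) + b * (r * v)" by (simp add: algebra_simps)
    then show "r * x \<in> ?I" by blast
  qed
  then obtain d where "d \<in> ?I" and dvd: "\<And>x. x \<in> ?I \<Longrightarrow> d dvd x"
    using is_PID_principal[OF assms] by blast
  have "a = a * 1 + b * 0" "b = a * 0 + b * 1" by simp_all
  then have "d dvd a" "d dvd b" using dvd by blast+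
  moreover obtain u v where "d = a * u + b * v" using \<open>d \<in> ?I\<close> by blast
  ultimately show thesis by (rule that)
qed

lemma is_PID_comaximal_if_not_dvd:
  fixes q a :: "'a::idom"
  assumes "is_PID TYPE('a)" and "irreducible q" and "\<not> q dvd a"
  shows "comaximal q a"
proof -
  obtain d u v where d: "d dvd q" "d dvd a" "d = q * u + a * v"
    using is_PID_bezout[OF assms(1)] by blast
  obtain t where "q = d * t" using d(1) by (elim dvdE)
  then have "d dvd 1 \<or> t dvd 1" using irreducibleD[OF assms(2)] by blast
  moreover have "\<not> t dvd 1"
  proof
    assume "t dvd 1"
    then have "associated (d * t) d" by (rule associated_mult_unit_left)
    then have "q dvd d" using \<open>q = d * t\<close> by (simp add: associated_def)
    then have "q dvd a" using d(2) by (rule dvd_trans)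
    with assms(3) show False ..
  qed
  ultimately have "(q * u + a * v) dvd 1" using d(3) by simp
  then show ?thesis by (rule comaximalI_unit)
qed

lemma is_PID_irreducible_imp_prime_elem:
  assumes "is_PID TYPE('a::idom)" and "irreducible (q :: 'a)"
  shows "prime_elem q"
proof (rule prime_elemI)
  show "q \<noteq> 0" "\<not> q dvd 1" using assms(2) by (auto simp: irreducible_def)
  fix a b assume "q dvd a * b"
  show "q dvd a \<or> q dvd b"
  proof (cases "q dvd a")
    case False
    then have "comaximal q a" by (rule is_PID_comaximal_if_not_dvd[OF assms])
    then obtain x y where "q * x + a * y = 1" unfolding comaximal_def by blast
    then have "b = b * (q * x + a * y)" by simp
    also have "\<dots> = q * (x * b) + (a * b) * y" by (simp add: algebra_simps)
    finally have b: "b = q * (x * b) + (a * b) * y" .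
    have "q dvd q * (x * b) + (a * b) * y" using \<open>q dvd a * b\<close> by (simp add: dvd_add)
    then have "q dvd b" by (simp only: b[symmetric])
    then show ?thesis ..
  qed blast
qed

lemma is_PID_wf_strict_dvd:
  assumes "is_PID TYPE('a::idom)"
  shows "wf {(a, b :: 'a). a dvd b \<and> \<not> b dvd a}"
  unfolding wf_iff_no_infinite_down_chain
proof
  assume "\<exists>g. \<forall>i. (g (Suc i), g i) \<in> {(a, b :: 'a). a dvd b \<and> \<not> b dvd a}"
  then obtain g :: "nat \<Rightarrow> 'a"
    where desc: "\<And>i. g (Suc i) dvd g i" and strict: "\<And>i. \<not> g i dvd g (Suc i)"
    by blast
  have chain: "g m dvd g n" if "n \<le> m" for m n
    using that
  proof (induction m rule: dec_induct)
    case (step m)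
    from desc[of m] step.IH show ?case by (rule dvd_trans)
  qed simp
  let ?I = "{x. \<exists>n. g n dvd x}"
  have "ring_ideal ?I" unfolding ring_ideal_def
  proof (intro conjI ballI allI)
    show "0 \<in> ?I" by simp
  next
    fix x y assume "x \<in> ?I" "y \<in> ?I"
    then obtain n m where "g n dvd x" "g m dvd y" by blast
    moreover have "g (max n m) dvd g n" "g (max n m) dvd g m" by (simp_all add: chain)
    ultimately have "g (max n m) dvd x + y" by (meson dvd_add dvd_trans)
    then show "x + y \<in> ?I" by blast
  next
    fix r x assume "x \<in> ?I"
    then obtain n where "g n dvd x" by blast
    then have "g n dvd r * x" by (rule dvd_mult)
    then show "r * x \<in> ?I" by blast
  qed
  then obtain c where "c \<in> ?I" and c_dvd: "\<And>x. x \<in> ?I \<Longrightarrow> c dvd x"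
    using is_PID_principal[OF assms] by blast
  then obtain N where "g N dvd c" by blast
  moreover have "c dvd g (Suc N)" by (rule c_dvd, rule CollectI, rule exI[of _ "Suc N"]) simp
  ultimately have "g N dvd g (Suc N)" by (rule dvd_trans)
  with strict show False by blast
qed

lemma is_PID_irreducible_divisor:
  assumes "is_PID TYPE('a::idom)" and "(x :: 'a) \<noteq> 0" and "\<not> x dvd 1"
  obtains q where "irreducible q" and "q dvd x"
proof -
  from assms(2,3) have "\<exists>q. irreducible q \<and> q dvd x"
  proof (induction x rule: wf_induct_rule[OF is_PID_wf_strict_dvd[OF assms(1)]])
    case (1 x)
    show ?case
    proof (cases "irreducible x")
      case False
      then obtain a b where x: "x = a * b" and "\<not> a dvd 1" "\<not> b dvd 1"
        using 1(2,3) by (auto simp: irreducible_def)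
      have "\<not> x dvd a"
      proof
        assume "x dvd a"
        then obtain s where "a = x * s" by (elim dvdE)
        then have "a * 1 = a * (b * s)" using x by (metis mult.assoc mult_1_right)
        then have "b * s = 1" using 1(2) x by simp
        with \<open>\<not> b dvd 1\<close> show False by (metis dvd_triv_left)
      qed
      moreover have "a \<noteq> 0" using 1(2) x by simp
      ultimately obtain q where "irreducible q" "q dvd a"
        using 1(1)[of a] x \<open>\<not> a dvd 1\<close> by auto
      then show ?thesis using x by (auto intro: dvd_mult2)
    qed auto
  qed
  then show thesis using that by blast
qed

lemma is_PID_power_decomposition:
  fixes x q :: "'a::idom"
  assumes "is_PID TYPE('a)" and "x \<noteq> 0" and "\<not> q dvd 1"
  obtains k c where "x = q ^ k * c" and "\<not> q dvd c"
proof -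
  from assms(2) have "\<exists>k c. x = q ^ k * c \<and> \<not> q dvd c"
  proof (induction x rule: wf_induct_rule[OF is_PID_wf_strict_dvd[OF assms(1)]])
    case (1 x)
    show ?case
    proof (cases "q dvd x")
      case True
      then obtain y where x: "x = q * y" by (elim dvdE)
      have "\<not> x dvd y"
      proof
        assume "x dvd y"
        then obtain s where "y = x * s" by (elim dvdE)
        then have "y * 1 = y * (q * s)" using x by (metis mult.assoc mult.commute mult_1_right)
        then have "q * s = 1" using 1(2) x by simp
        with assms(3) show False by (metis dvd_triv_left)
      qed
      moreover have "y \<noteq> 0" using 1(2) x by simp
      ultimately obtain k c where "y = q ^ k * c" "\<not> q dvd c" using 1(1)[of y] x by auto
      then have "x = q ^ Suc k * c \<and> \<not> q dvd c" using x by (simp add: mult.assoc)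
      then show ?thesis by blast
    qed (metis mult_1 power_0)
  qed
  then show thesis using that by blast
qed

lemma is_PID_irreducible_fps_cases:
  fixes f :: "'a::idom fps"
  assumes PID: "is_PID TYPE('a)" and irr: "irreducible f"
  shows "associated f fps_X \<or> (\<exists>p n. prime_elem p \<and> associated (f $ 0) (p ^ n))"
proof (cases "f $ 0 = 0")
  case True
  then have f: "f = fps_X * fps_shift 1 f" using fps_const_plus_fps_X_shift[of f] by simp
  have "\<not> (fps_X :: 'a fps) dvd 1" by (simp add: fps_dvd_one_iff)
  then have "fps_shift 1 f dvd 1" using irreducibleD[OF irr f] by blast
  then have "associated f fps_X" using f associated_mult_unit_left by metis
  then show ?thesis ..
next
  case False
  let ?x = "f $ 0"
  have "\<not> ?x dvd 1" using irreducible_fps_nth_0(1)[OF irr] .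
  then obtain q where "irreducible q" "q dvd ?x" using is_PID_irreducible_divisor[OF PID False] by blast
  have q: "prime_elem q" using PID \<open>irreducible q\<close> by (rule is_PID_irreducible_imp_prime_elem)
  obtain k c where x: "?x = q ^ k * c" and "\<not> q dvd c"
    using is_PID_power_decomposition[OF PID False] q by (metis prime_elem_not_unit)
  have "comaximal (q ^ k) c"
    using is_PID_comaximal_if_not_dvd[OF PID \<open>irreducible q\<close> \<open>\<not> q dvd c\<close>]
    by (rule comaximal_power_left)
  then have "q ^ k dvd 1 \<or> c dvd 1" using irreducible_fps_nth_0(2)[OF irr x] by blast
  moreover have "\<not> q ^ k dvd 1"
  proof
    assume "q ^ k dvd 1"
    then obtain w where "1 = q ^ k * w" by (elim dvdE)
    then have "c = ?x * w" using x by (simp add: algebra_simps)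
    then have "q dvd c" using \<open>q dvd ?x\<close> by simp
    with \<open>\<not> q dvd c\<close> show False ..
  qed
  ultimately have "associated ?x (q ^ k)" unfolding x by (simp add: associated_mult_unit_left)
  with q show ?thesis by blast
qed

lemma comaximal_prime_elem_if_not_dvd:
  fixes p b :: "'a::{factorial_semiring,idom}"
  assumes primes_comaximal:
      "\<And>p q :: 'a. prime_elem p \<Longrightarrow> prime_elem q \<Longrightarrow> \<not> associated p q \<Longrightarrow> comaximal p q"
    and "prime_elem p" and "b \<noteq> 0" and "\<not> p dvd b"
  shows "comaximal p b"
  using assms(3,4)
proof (induction b rule: prime_divisors_induct)
  case (unit x)
  from unit.hyps show ?case by (rule comaximal_unit_right)
next
  case (factor q x)
  then have "\<not> p dvd q" and "\<not> p dvd x" by (auto intro: dvd_mult2 dvd_mult)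
  then have "comaximal p q"
    using primes_comaximal[OF assms(2)] factor.hyps by (auto simp: associated_def prime_imp_prime_elem)
  moreover have "comaximal p x" using factor \<open>\<not> p dvd x\<close> by simp
  ultimately show ?case
    using comaximal_mult_left[of q p x] by (simp add: comaximal_commute)
qed simp

lemma bezout_if_primes_comaximal:
  fixes a b :: "'a::{factorial_semiring,idom}"
  assumes primes_comaximal:
      "\<And>p q :: 'a. prime_elem p \<Longrightarrow> prime_elem q \<Longrightarrow> \<not> associated p q \<Longrightarrow> comaximal p q"
  obtains d u v where "d dvd a" and "d dvd b" and "d = a * u + b * v"
proof -
  have "\<exists>d u v. d dvd a \<and> d dvd b \<and> d = a * u + b * v"
  proof (induction a arbitrary: b rule: prime_divisors_induct)
    case zero
    show ?case by (rule exI[of _ b], rule exI[of _ 0], rule exI[of _ 1]) simp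
  next
    case (unit x)
    show ?case by (rule exI[of _ x], rule exI[of _ 1], rule exI[of _ 0]) (simp add: unit unit_imp_dvd)
  next
    case (factor p x)
    show ?case
    proof (cases "p dvd b")
      case True
      then obtain b' where b: "b = p * b'" by (elim dvdE)
      obtain d u v where d: "d dvd x" "d dvd b'" "d = x * u + b' * v" using factor.IH by blast
      have "p * d dvd p * x" "p * d dvd b" using d(1,2) by (simp_all add: b)
      moreover have "p * d = p * x * u + b * v" using d(3) by (simp add: b algebra_simps)
      ultimately show ?thesis by blast
    next
      case False
      then have "comaximal p b"
        using comaximal_prime_elem_if_not_dvd[OF primes_comaximal] factor.hyps
        by (metis dvd_0_right prime_imp_prime_elem)
      then obtain s t where st: "p * s + b * t = 1" unfolding comaximal_def by blast
      obtain d u v where d: "d dvd x" "d dvd b" "d = x * u + b * v" using factor.IH by blast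
      have "d = x * u * (p * s + b * t) + b * v" using d(3) st by simp
      also have "\<dots> = p * x * (u * s) + b * (x * u * t + v)" by (simp add: algebra_simps)
      finally have "d = p * x * (u * s) + b * (x * u * t + v)" .
      moreover have "d dvd p * x" using d(1) by simp
      ultimately show ?thesis using d(2) by blast
    qed
  qed
  then show thesis using that by blast
qed

lemma is_PID_if_primes_comaximal:
  assumes primes_comaximal:
      "\<And>p q :: 'a::{factorial_semiring,idom}.
         prime_elem p \<Longrightarrow> prime_elem q \<Longrightarrow> \<not> associated p q \<Longrightarrow> comaximal p q"
  shows "is_PID TYPE('a)"
  unfolding is_PID_def
proof (intro allI impI)
  fix I :: "'a set" assume I: "ring_ideal I"
  show "\<exists>a. I = {a * r | r. True}"
  proof (cases "I \<subseteq> {0}")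
    case True
    then have "I = {0 * r | r. True}" using I by (auto simp: ring_ideal_def)
    then show ?thesis ..
  next
    case False
    then obtain a where a: "a \<in> I" "a \<noteq> 0"
      and a_min: "\<And>c. c \<in> I \<Longrightarrow> c \<noteq> 0 \<Longrightarrow>
                    size (prime_factorization a) \<le> size (prime_factorization c)"
      using ex_has_least_nat[of "\<lambda>c. c \<in> I \<and> c \<noteq> 0" _ "\<lambda>c. size (prime_factorization c)"]
      by blast
    have "a dvd b" if "b \<in> I" for b
    proof -
      obtain d u v where d: "d dvd a" "d dvd b" "d = a * u + b * v"
        using bezout_if_primes_comaximal[OF primes_comaximal] by blast
      have "d \<in> I" using I a(1) \<open>b \<in> I\<close> unfolding d(3) ring_ideal_def by (metis mult.commute)
      moreover have "d \<noteq> 0" using d(1) a(2) by auto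
      ultimately have "size (prime_factorization a) \<le> size (prime_factorization d)" by (rule a_min)
      moreover have "prime_factorization d \<subseteq># prime_factorization a"
        using prime_factorization_subset_iff_dvd \<open>d \<noteq> 0\<close> a(2) d(1) by blast
      ultimately have "prime_factorization a \<subseteq># prime_factorization d"
        by (metis mset_subset_size subset_mset.le_less not_le subset_mset.order_refl)
      then have "a dvd d" using prime_factorization_subset_iff_dvd \<open>d \<noteq> 0\<close> a(2) by blast
      then show "a dvd b" using d(2) by (rule dvd_trans)
    qed
    then have "I \<subseteq> {a * r | r. True}" by (auto elim!: dvdE)
    moreover have "{a * r | r. True} \<subseteq> I" using I a(1) by (auto simp: ring_ideal_def mult.commute)
    ultimately show ?thesis by blast
  qed
qed

lemma exists_irreducible_fps_nth_0_not_prime_power: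
  assumes "\<not> is_PID TYPE('a::{factorial_semiring,idom})"
  shows "\<exists>f :: 'a fps. irreducible f \<and> f $ 0 \<noteq> 0 \<and>
           \<not> (\<exists>p n. prime_elem p \<and> associated (f $ 0) (p ^ n))"
proof -
  obtain \<pi> \<sigma> :: 'a
    where primes: "prime_elem \<pi>" "prime_elem \<sigma>" "\<not> associated \<pi> \<sigma>" and "\<not> comaximal \<pi> \<sigma>"
    using is_PID_if_primes_comaximal assms by blast
  let ?f = "fps_const (\<pi> * \<sigma>) + fps_X * 1"
  have "irreducible ?f"
    using irreducible_fps_prime_product_plus_X[OF primes \<open>\<not> comaximal \<pi> \<sigma>\<close>, of 1] by simp
  moreover have "?f $ 0 \<noteq> 0" using primes(1,2) by (simp add: prime_elem_not_zeroI)
  moreover have "\<not> (\<exists>p n. prime_elem p \<and> associated (?f $ 0) (p ^ n))"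
    using prime_product_not_associated_prime_power[OF primes] by simp
  ultimately show ?thesis by blast
qed

theorem corollary2p3:
  shows
  "(\<forall>f :: 'a::idom fps.
      (irreducible f \<longrightarrow>
         \<not> (f $ 0) dvd 1 \<and>
         (\<forall>a b. f $ 0 = a * b \<and> comaximal a b \<longrightarrow> a dvd 1 \<or> b dvd 1))
    \<and> ((f $ 1) dvd 1 \<and> \<not> (f $ 0) dvd 1 \<and>
         (\<forall>a b. f $ 0 = a * b \<and> comaximal a b \<longrightarrow> a dvd 1 \<or> b dvd 1)
         \<longrightarrow> irreducible f))
   \<and> (is_PID TYPE('b::idom) \<longrightarrow>
      (\<forall>f :: 'b fps. irreducible f \<longrightarrow>
         associated f fps_X \<or>
         (\<exists>p n. prime_elem p \<and> associated (f $ 0) (p ^ n))))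
   \<and> (\<not> is_PID TYPE('c::{factorial_semiring,idom}) \<longrightarrow>
      (\<exists>f :: 'c fps. irreducible f \<and> f $ 0 \<noteq> 0 \<and>
         \<not> (\<exists>p n. prime_elem p \<and> associated (f $ 0) (p ^ n)))
      \<and> (\<forall>\<pi> \<sigma> :: 'c. prime_elem \<pi> \<and> prime_elem \<sigma> \<and> \<not> associated \<pi> \<sigma> \<and>
            \<not> comaximal \<pi> \<sigma> \<longrightarrow>
           (\<forall>U :: 'c fps. U dvd 1 \<longrightarrow> irreducible (fps_const (\<pi> * \<sigma>) + fps_X * U))))"
proof (intro conjI allI impI)
  fix f :: "'a fps"
  show "\<not> f $ 0 dvd 1" if "irreducible f" using that by (rule irreducible_fps_nth_0)
  show "a dvd 1 \<or> b dvd 1" if "irreducible f" and "f $ 0 = a * b \<and> comaximal a b" for a b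
    using that irreducible_fps_nth_0(2) by blast
  show "irreducible f" if "f $ 1 dvd 1 \<and> \<not> f $ 0 dvd 1 \<and>
      (\<forall>a b. f $ 0 = a * b \<and> comaximal a b \<longrightarrow> a dvd 1 \<or> b dvd 1)"
    using that by (intro irreducible_fpsI) blast+
qed (use is_PID_irreducible_fps_cases exists_irreducible_fps_nth_0_not_prime_power
       irreducible_fps_prime_product_plus_X in blast)+

end
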